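(* Let $\mathcal V$ be a finite set of variables ranging over $\mathbb{N}$ and let $\Sigma=\mathcal V\cup\{\underline{x} : x\in\mathcal V\}$ (a fresh underlined copy of each variable). Every equation of one of the forms $x=c$ (with $c\in\mathbb{N}$), $x+y=z$, or $x\cdot y=z$, where $x,y,z\in\mathcal V$ are pairwise distinct variables, is encoded by some language $L\subseteq\Sigma^*$ that is definable by a regulated $\mathsf{C\text{-}RASP}$ formula.
   Context: $\mathsf{C\text{-}RASP}$ formulas over a finite alphabet $\Sigma$: $\phi ::= \sigma \mid \Diamond^{-}\phi \mid \Box^{-}\phi \mid \neg\phi \mid \phi_1\wedge\phi_2 \mid \sum_{t\in\mathcal{T}}\alpha_t t\sim k$, terms $t ::= \#[\phi] \mid c$, with $\sigma\in\Sigma$, $\alpha_t,k,c\in\mathbb{Z}$, ${\sim}\in\{<,\le,=,\ge,>\}$. Semantics at position $i$ of $w=w_1\cdots w_n$: $w,i\models\sigma$ iff $w_i=\sigma$; Boolean connectives as usual; $w,i\models\Diamond^{-}\phi$ iff $w,j\models\phi$ for some $j<i$; $w,i\models\Box^{-}\phi$ iff $w,j\models\phi$ for all $j\le i$; $\#[\phi]$ evaluates to $|\{j\in[1,i]: w,j\models\phi\}|$, $c$ to $c$, and comparisons are integer comparisons. $w\models\phi$ iff $w,|w|\models\phi$; $\phi$ defines $L(\phi)=\{w: w\models\phi\}$. A formula is regulated if no atomic formula $\sigma$ ($\sigma\in\Sigma$) occurs outside the scope of a counting operator $\#$. For $w\in\Sigma^*$ and $\sigma\in\Sigma$, $|w|_\sigma$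 is the number of occurrences of $\sigma$ in $w$. A language $L\subseteq\Sigma^*$ encodes an equation $\mathcal D$ over variables $x_1,\dots,x_m\in\mathcal V\subseteq\Sigma$ if (i) for every $w\in L$, the assignment $x_i\mapsto|w|_{x_i}$ satisfies $\mathcal D$, and (ii) for all $n_1,\dots,n_m\in\mathbb N$ satisfying $\mathcal D$ there is $w\in L$ with $|w|_{x_i}=n_i$ for all $i\in[m]$. *)

theory Defs
  imports Main
begin

datatype cmp = CLt | CLe | CEq | CGe | CGt

datatype 'a crasp =
    Atom 'a
  | DiaM "'a crasp"
  | BoxM "'a crasp"
  | Neg "'a crasp"
  | Conj "'a crasp" "'a crasp"
  | Cmp "(int \<times> 'a cterm) list" cmp int
and 'a cterm =
    Count "'a crasp"
  | CConst int

fun cmp_sem :: "cmp \<Rightarrow> int \<Rightarrow> int \<Rightarrow> bool" where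
  "cmp_sem CLt a b = (a < b)"
| "cmp_sem CLe a b = (a \<le> b)"
| "cmp_sem CEq a b = (a = b)"
| "cmp_sem CGe a b = (a \<ge> b)"
| "cmp_sem CGt a b = (a > b)"

text \<open>Positions are 1-based: position i refers to the list element w ! (i - 1).\<close>
fun sat :: "'a list \<Rightarrow> nat \<Rightarrow> 'a crasp \<Rightarrow> bool"
and tval :: "'a list \<Rightarrow> nat \<Rightarrow> 'a cterm \<Rightarrow> int" where
  "sat w i (Atom s) = (1 \<le> i \<and> i \<le> length w \<and> w ! (i - 1) = s)"
| "sat w i (DiaM f) = (\<exists>j. 1 \<le> j \<and> j < i \<and> sat w j f)"
| "sat w i (BoxM f) = (\<forall>j. 1 \<le> j \<and> j \<le> i \<longrightarrow> sat w j f)"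
| "sat w i (Neg f) = (\<not> sat w i f)"
| "sat w i (Conj f g) = (sat w i f \<and> sat w i g)"
| "sat w i (Cmp ts r k) = cmp_sem r (sum_list (map (\<lambda>at. fst at * tval w i (snd at)) ts)) k"
| "tval w i (Count f) = int (card {j. 1 \<le> j \<and> j \<le> i \<and> sat w j f})"
| "tval w i (CConst c) = c"

fun atoms :: "'a crasp \<Rightarrow> 'a set"
and tatoms :: "'a cterm \<Rightarrow> 'a set" where
  "atoms (Atom s) = {s}"
| "atoms (DiaM f) = atoms f"
| "atoms (BoxM f) = atoms f"
| "atoms (Neg f) = atoms f"
| "atoms (Conj f g) = atoms f \<union> atoms g"
| "atoms (Cmp ts r k) = (\<Union>at\<in>set ts. tatoms (snd at))"
| "tatoms (Count f) = atoms f"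
| "tatoms (CConst c) = {}"

text \<open>Regulated: no atomic formula outside the scope of a counting operator.\<close>
fun regulated :: "'a crasp \<Rightarrow> bool" where
  "regulated (Atom s) = False"
| "regulated (DiaM f) = regulated f"
| "regulated (BoxM f) = regulated f"
| "regulated (Neg f) = regulated f"
| "regulated (Conj f g) = (regulated f \<and> regulated g)"
| "regulated (Cmp ts r k) = True"

definition lang :: "'a set \<Rightarrow> 'a crasp \<Rightarrow> 'a list set" where
  "lang Sig f = {w. set w \<subseteq> Sig \<and> sat w (length w) f}"

text \<open>Letters: a variable x (Var x) or its underlined copy (Und x).\<close>
datatype 'v letter = Var 'v | Und 'v

definition alphabet :: "'v set \<Rightarrow> 'v letter set" where
  "alphabet V = Var ` V \<union> Und ` V"

datatype 'v eqn = EqConst 'v nat | EqAdd 'v 'v 'v | EqMul 'v 'v 'v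

fun eqn_sat :: "'v eqn \<Rightarrow> ('v \<Rightarrow> nat) \<Rightarrow> bool" where
  "eqn_sat (EqConst x c) a = (a x = c)"
| "eqn_sat (EqAdd x y z) a = (a x + a y = a z)"
| "eqn_sat (EqMul x y z) a = (a x * a y = a z)"

fun eqn_vars :: "'v eqn \<Rightarrow> 'v set" where
  "eqn_vars (EqConst x c) = {x}"
| "eqn_vars (EqAdd x y z) = {x, y, z}"
| "eqn_vars (EqMul x y z) = {x, y, z}"

fun eqn_wf :: "'v set \<Rightarrow> 'v eqn \<Rightarrow> bool" where
  "eqn_wf V (EqConst x c) = (x \<in> V)"
| "eqn_wf V (EqAdd x y z) = (x \<in> V \<and> y \<in> V \<and> z \<in> V \<and> x \<noteq> y \<and> x \<noteq> z \<and> y \<noteq> z)"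
| "eqn_wf V (EqMul x y z) = (x \<in> V \<and> y \<in> V \<and> z \<in> V \<and> x \<noteq> y \<and> x \<noteq> z \<and> y \<noteq> z)"

definition letter_count :: "'v letter list \<Rightarrow> 'v \<Rightarrow> nat" where
  "letter_count w x = count_list w (Var x)"

definition encodes :: "'v letter list set \<Rightarrow> 'v eqn \<Rightarrow> bool" where
  "encodes L D \<longleftrightarrow>
     (\<forall>w\<in>L. eqn_sat D (letter_count w)) \<and>
     (\<forall>n. eqn_sat D n \<longrightarrow> (\<exists>w\<in>L. \<forall>x\<in>eqn_vars D. letter_count w x = n x))"

end

theory Submission
  imports Defs
begin

(* Linear equations are a single counting comparison.  For x * y = z (writing y', z' for the
   underlined letters) the witnesses are the words x^a (y z^a y' z'^a)^b.  Local conditions,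
   checked at every position, force every block opened by y and closed by y' to contain as many
   letters z as there are letters x, where the z' of a closed block cancel its z.  An induction
   over prefixes then shows #z = #x * #y once the last block is closed. *)

lemma count_list_replicate [simp]: "count_list (replicate n c) s = (if c = s then n else 0)"
  by (induction n) auto

lemma count_list_concat_replicate [simp]:
  "count_list (concat (replicate n u)) s = n * count_list u s"
  by (induction n) auto

lemma last_take_eq_nth: "1 \<le> j \<Longrightarrow> j \<le> length w \<Longrightarrow> last (take j w) = w ! (j - 1)"
  by (cases j) (auto simp: take_Suc_conv_app_nth)

lemma ball_atLeastAtMost_add_split:
  "(\<forall>j \<in> {1..m + n}. Q j) \<longleftrightarrow> (\<forall>j \<in> {1..m}. Q j) \<and> (\<forall>j \<in> {1..n}. Q (m + j :: nat))"
proof -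
  have "{1..m + n} = {1..m} \<union> (+) m ` {1..n}"
    by (auto simp: image_iff)
  then show ?thesis by (simp only: ball_Un) blast
qed

lemma tval_Count_Atom: "tval w i (Count (Atom s)) = int (count_list (take i w) s)"
proof -
  have "{j. 1 \<le> j \<and> j \<le> i \<and> sat w j (Atom s)} = Suc ` {j. j < length (take i w) \<and> s = take i w ! j}"
    by (auto simp: image_iff Suc_le_eq gr0_conv_Suc)
  then have "card {j. 1 \<le> j \<and> j \<le> i \<and> sat w j (Atom s)} = length (filter ((=) s) (take i w))"
    by (simp only: length_filter_conv_card card_image inj_Suc inj_on_subset subset_UNIV)
  then show ?thesis
    by (simp add: count_list_eq_length_filter)
qed

definition lin_eq :: "(int \<times> 'a) list \<Rightarrow> int \<Rightarrow> 'a crasp" where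
  "lin_eq cs k = Cmp (map (\<lambda>(c, s). (c, Count (Atom s))) cs) CEq k"

lemma sat_lin_eq:
  "sat w i (lin_eq cs k) \<longleftrightarrow> (\<Sum>(c, s) \<leftarrow> cs. c * int (count_list (take i w) s)) = k"
proof -
  have "map (\<lambda>at. fst at * tval w i (snd at)) (map (\<lambda>(c, s). (c, Count (Atom s))) cs)
      = map (\<lambda>(c, s). c * int (count_list (take i w) s)) cs"
    by (auto simp: tval_Count_Atom simp del: tval.simps)
  then show ?thesis by (simp only: lin_eq_def sat.simps cmp_sem.simps)
qed

lemma regulated_lin_eq [simp]: "regulated (lin_eq cs k)"
  by (simp add: lin_eq_def)

lemma atoms_lin_eq [simp]: "atoms (lin_eq cs k) = snd ` set cs"
  by (force simp: lin_eq_def image_iff)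

definition letter_imp :: "'a \<Rightarrow> 'a crasp \<Rightarrow> 'a crasp" where
  "letter_imp s \<phi> = Neg (Conj (Atom s) (Neg \<phi>))"

lemma sat_letter_imp:
  "sat w i (letter_imp s \<phi>) \<longleftrightarrow> (1 \<le> i \<and> i \<le> length w \<and> w ! (i - 1) = s \<longrightarrow> sat w i \<phi>)"
  by (auto simp: letter_imp_def)

lemma atoms_letter_imp [simp]: "atoms (letter_imp s \<phi>) = insert s (atoms \<phi>)"
  by (auto simp: letter_imp_def)

(* Writing the past box as #[not phi] = 0 rather than with BoxM puts phi under a counting
   operator, so phi may test the current letter and the formula is still regulated. *)
definition always :: "'a crasp \<Rightarrow> 'a crasp" where
  "always \<phi> = Cmp [(1, Count (Neg \<phi>))] CEq 0"

lemma sat_always: "sat w i (always \<phi>) \<longleftrightarrow> (\<forall>j. 1 \<le> j \<and> j \<le> i \<longrightarrow> sat w j \<phi>)"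
proof -
  have "finite {j. 1 \<le> j \<and> j \<le> i \<and> sat w j (Neg \<phi>)}" by simp
  then show ?thesis by (auto simp: always_def)
qed

lemma regulated_always [simp]: "regulated (always \<phi>)"
  by (simp add: always_def)

lemma atoms_always [simp]: "atoms (always \<phi>) = atoms \<phi>"
  by (simp add: always_def)

definition all_prefixes :: "('a list \<Rightarrow> bool) \<Rightarrow> 'a list \<Rightarrow> bool" where
  "all_prefixes P w \<longleftrightarrow> (\<forall>j \<in> {1..length w}. P (take j w))"

lemma all_prefixes_Nil [simp]: "all_prefixes P []"
  by (simp add: all_prefixes_def)

lemma all_prefixes_append:
  "all_prefixes P (u @ v) \<longleftrightarrow> all_prefixes P u \<and> (\<forall>j \<in> {1..length v}. P (u @ take j v))"
  unfolding all_prefixes_def length_append ball_atLeastAtMost_add_split by auto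

lemma all_prefixes_snoc [simp]: "all_prefixes P (u @ [c]) \<longleftrightarrow> all_prefixes P u \<and> P (u @ [c])"
  by (simp add: all_prefixes_append)

lemma all_prefixes_append_replicate:
  "all_prefixes P (u @ replicate n c) \<longleftrightarrow> all_prefixes P u \<and> (\<forall>j \<in> {1..n}. P (u @ replicate j c))"
  by (simp add: all_prefixes_append)

lemma sat_always_iff_all_prefixes:
  assumes "\<And>j. 1 \<le> j \<Longrightarrow> j \<le> length w \<Longrightarrow> sat w j \<phi> \<longleftrightarrow> P (take j w)"
  shows "sat w (length w) (always \<phi>) \<longleftrightarrow> all_prefixes P w"
  using assms by (auto simp: sat_always all_prefixes_def)

lemma encodes_langI:
  assumes "\<And>w. set w \<subseteq> Sig \<Longrightarrow> sat w (length w) \<phi> \<Longrightarrow> eqn_sat D (letter_count w)"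
    and "\<And>n. eqn_sat D n \<Longrightarrow>
      \<exists>w. set w \<subseteq> Sig \<and> sat w (length w) \<phi> \<and> (\<forall>x \<in> eqn_vars D. letter_count w x = n x)"
  shows "encodes (lang Sig \<phi>) D"
  using assms unfolding encodes_def lang_def by blast

lemma encodes_const_formula:
  assumes "x \<in> V"
  shows "encodes (lang (alphabet V) (lin_eq [(1, Var x)] (int c))) (EqConst x c)"
proof (rule encodes_langI)
  fix n assume "eqn_sat (EqConst x c) n"
  then show "\<exists>w. set w \<subseteq> alphabet V \<and> sat w (length w) (lin_eq [(1, Var x)] (int c))
      \<and> (\<forall>v \<in> eqn_vars (EqConst x c). letter_count w v = n v)"
    using assms by (intro exI[of _ "replicate c (Var x)"]) (auto simp: sat_lin_eq alphabet_def letter_count_def)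
qed (simp add: sat_lin_eq letter_count_def)

lemma encodes_add_formula:
  assumes "x \<in> V" "y \<in> V" "z \<in> V" "x \<noteq> y" "x \<noteq> z" "y \<noteq> z"
  shows "encodes (lang (alphabet V) (lin_eq [(1, Var x), (1, Var y), (-1, Var z)] 0)) (EqAdd x y z)"
proof (rule encodes_langI)
  fix n assume "eqn_sat (EqAdd x y z) n"
  then show "\<exists>w. set w \<subseteq> alphabet V \<and> sat w (length w) (lin_eq [(1, Var x), (1, Var y), (-1, Var z)] 0)
      \<and> (\<forall>v \<in> eqn_vars (EqAdd x y z). letter_count w v = n v)"
    using assms
    by (intro exI[of _ "replicate (n x) (Var x) @ replicate (n y) (Var y) @ replicate (n z) (Var z)"])
      (auto simp: sat_lin_eq alphabet_def letter_count_def)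
qed (simp add: sat_lin_eq letter_count_def)

(* y opens and y' closes a block, z occurs only inside and z' only outside a block, and the
   letters x precede all blocks; at y' the z of the closing block, counted as #z - #z', number #x. *)
definition mul_step :: "'v \<Rightarrow> 'v \<Rightarrow> 'v \<Rightarrow> 'v letter crasp" where
  "mul_step x y z =
     Conj (letter_imp (Var x) (lin_eq [(1, Var y)] 0))
    (Conj (letter_imp (Var y) (Conj (lin_eq [(1, Var z), (-1, Und z)] 0) (lin_eq [(1, Var y), (-1, Und y)] 1)))
    (Conj (letter_imp (Und y) (Conj (lin_eq [(1, Var z), (-1, Und z), (-1, Var x)] 0) (lin_eq [(1, Var y), (-1, Und y)] 0)))
    (Conj (letter_imp (Var z) (lin_eq [(1, Var y), (-1, Und y)] 1))
          (letter_imp (Und z) (lin_eq [(1, Var y), (-1, Und y)] 0)))))"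

definition mul_formula :: "'v \<Rightarrow> 'v \<Rightarrow> 'v \<Rightarrow> 'v letter crasp" where
  "mul_formula x y z = Conj (always (mul_step x y z)) (lin_eq [(1, Var y), (-1, Und y)] 0)"

definition mul_step_ok :: "'v \<Rightarrow> 'v \<Rightarrow> 'v \<Rightarrow> 'v letter list \<Rightarrow> bool" where
  "mul_step_ok x y z u \<longleftrightarrow>
     (last u = Var x \<longrightarrow> count_list u (Var y) = 0) \<and>
     (last u = Var y \<longrightarrow> count_list u (Var z) = count_list u (Und z)
                       \<and> count_list u (Var y) = Suc (count_list u (Und y))) \<and>
     (last u = Und y \<longrightarrow> count_list u (Var z) = count_list u (Und z) + count_list u (Var x)
                       \<and> count_list u (Var y) = count_list u (Und y)) \<and>
     (last u = Var z \<longrightarrow> count_list u (Var y) = Suc (count_list u (Und y))) \<and>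
     (last u = Und z \<longrightarrow> count_list u (Var y) = count_list u (Und y))"

lemma sat_mul_step:
  "1 \<le> j \<Longrightarrow> j \<le> length w \<Longrightarrow> sat w j (mul_step x y z) \<longleftrightarrow> mul_step_ok x y z (take j w)"
  by (auto simp: mul_step_def mul_step_ok_def sat_letter_imp sat_lin_eq last_take_eq_nth)

lemma sat_mul_formula:
  "sat w (length w) (mul_formula x y z) \<longleftrightarrow>
     all_prefixes (mul_step_ok x y z) w \<and> count_list w (Var y) = count_list w (Und y)"
  by (simp add: mul_formula_def sat_always_iff_all_prefixes sat_mul_step sat_lin_eq)

lemma regulated_mul_formula: "regulated (mul_formula x y z)"
  by (simp add: mul_formula_def)

lemma atoms_mul_formula: "atoms (mul_formula x y z) = {Var x, Var y, Var z, Und y, Und z}"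
  by (auto simp: mul_formula_def mul_step_def)

(* Outside a block every closed block has contributed #x letters z; inside one, the z' written
   so far play that role. *)
definition mul_invariant :: "'v \<Rightarrow> 'v \<Rightarrow> 'v \<Rightarrow> 'v letter list \<Rightarrow> bool" where
  "mul_invariant x y z u \<longleftrightarrow>
     count_list u (Var y) = count_list u (Und y)
       \<and> count_list u (Var z) = count_list u (Var x) * count_list u (Und y)
   \<or> count_list u (Var y) = Suc (count_list u (Und y))
       \<and> count_list u (Und z) = count_list u (Var x) * count_list u (Und y)"

lemma mul_invariant_snoc:
  assumes "x \<noteq> y" "x \<noteq> z" "y \<noteq> z"
    and "mul_invariant x y z u" and "mul_step_ok x y z (u @ [c])"
  shows "mul_invariant x y z (u @ [c])"
  using assms by (auto simp: mul_invariant_def mul_step_ok_def)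

lemma all_prefixes_mul_invariant:
  assumes "x \<noteq> y" "x \<noteq> z" "y \<noteq> z"
  shows "all_prefixes (mul_step_ok x y z) u \<Longrightarrow> mul_invariant x y z u"
proof (induction u rule: rev_induct)
  case Nil
  then show ?case by (simp add: mul_invariant_def)
next
  case (snoc c u)
  then show ?case using mul_invariant_snoc[OF assms] by simp
qed

lemma mul_formula_sound:
  assumes "x \<noteq> y" "x \<noteq> z" "y \<noteq> z" and "sat w (length w) (mul_formula x y z)"
  shows "count_list w (Var x) * count_list w (Var y) = count_list w (Var z)"
  using assms all_prefixes_mul_invariant[OF assms(1-3), of w]
  by (auto simp: sat_mul_formula mul_invariant_def)

definition mul_block :: "nat \<Rightarrow> 'v \<Rightarrow> 'v \<Rightarrow> 'v letter list" where
  "mul_block a y z = Var y # replicate a (Var z) @ Und y # replicate a (Und z)"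

definition mul_word :: "nat \<Rightarrow> nat \<Rightarrow> 'v \<Rightarrow> 'v \<Rightarrow> 'v \<Rightarrow> 'v letter list" where
  "mul_word a b x y z = replicate a (Var x) @ concat (replicate b (mul_block a y z))"

lemma count_list_mul_word:
  assumes "x \<noteq> y" "x \<noteq> z" "y \<noteq> z"
  shows "count_list (mul_word a b x y z) (Var x) = a"
    and "count_list (mul_word a b x y z) (Var y) = b"
    and "count_list (mul_word a b x y z) (Und y) = b"
    and "count_list (mul_word a b x y z) (Var z) = a * b"
    and "count_list (mul_word a b x y z) (Und z) = a * b"
  using assms by (auto simp: mul_word_def mul_block_def)

lemma all_prefixes_append_mul_block:
  assumes "x \<noteq> y" "x \<noteq> z" "y \<noteq> z"
    and "all_prefixes (mul_step_ok x y z) u"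
    and "count_list u (Var x) = a"
    and "count_list u (Var y) = count_list u (Und y)"
    and "count_list u (Var z) = count_list u (Und z)"
  shows "all_prefixes (mul_step_ok x y z) (u @ mul_block a y z)"
proof -
  let ?P = "mul_step_ok x y z"
  have "all_prefixes ?P (u @ [Var y])"
    using assms by (simp add: mul_step_ok_def)
  then have "all_prefixes ?P ((u @ [Var y]) @ replicate a (Var z))"
    using assms by (simp add: all_prefixes_append_replicate mul_step_ok_def del: append_assoc)
  then have "all_prefixes ?P (((u @ [Var y]) @ replicate a (Var z)) @ [Und y])"
    using assms by (simp add: mul_step_ok_def del: append_assoc)
  then have "all_prefixes ?P ((((u @ [Var y]) @ replicate a (Var z)) @ [Und y]) @ replicate a (Und z))"
    using assms by (simp add: all_prefixes_append_replicate mul_step_ok_def del: append_assoc)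
  then show ?thesis by (simp add: mul_block_def)
qed

lemma all_prefixes_mul_word:
  assumes "x \<noteq> y" "x \<noteq> z" "y \<noteq> z"
  shows "all_prefixes (mul_step_ok x y z) (mul_word a b x y z)"
proof (induction b)
  case 0
  have "all_prefixes (mul_step_ok x y z) ([] @ replicate a (Var x))"
    unfolding all_prefixes_append_replicate using assms by (simp add: mul_step_ok_def)
  then show ?case by (simp add: mul_word_def)
next
  case (Suc b)
  have "mul_word a (Suc b) x y z = mul_word a b x y z @ mul_block a y z"
    by (simp add: mul_word_def replicate_append_same[symmetric])
  then show ?case
    using all_prefixes_append_mul_block[OF assms Suc] count_list_mul_word[OF assms] by simp
qed

lemma encodes_mul_formula:
  assumes "x \<in> V" "y \<in> V" "z \<in> V" and distinct: "x \<noteq> y" "x \<noteq> z" "y \<noteq> z"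
  shows "encodes (lang (alphabet V) (mul_formula x y z)) (EqMul x y z)"
proof (rule encodes_langI)
  fix w assume "sat w (length w) (mul_formula x y z)"
  then show "eqn_sat (EqMul x y z) (letter_count w)"
    using mul_formula_sound[OF distinct] by (simp add: letter_count_def)
next
  fix n assume "eqn_sat (EqMul x y z) n"
  then have "n x * n y = n z" by simp
  let ?w = "mul_word (n x) (n y) x y z"
  have "set ?w \<subseteq> alphabet V"
    using assms by (auto simp: alphabet_def mul_word_def mul_block_def)
  moreover have "sat ?w (length ?w) (mul_formula x y z)"
    using all_prefixes_mul_word[OF distinct] count_list_mul_word[OF distinct]
    by (simp add: sat_mul_formula)
  moreover have "\<forall>v \<in> eqn_vars (EqMul x y z). letter_count ?w v = n v"
    using \<open>n x * n y = n z\<close> count_list_mul_word[OF distinct] by (simp add: letter_count_def)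
  ultimately show "\<exists>w. set w \<subseteq> alphabet V \<and> sat w (length w) (mul_formula x y z)
      \<and> (\<forall>v \<in> eqn_vars (EqMul x y z). letter_count w v = n v)"
    by blast
qed

fun eqn_formula :: "'v eqn \<Rightarrow> 'v letter crasp" where
  "eqn_formula (EqConst x c) = lin_eq [(1, Var x)] (int c)"
| "eqn_formula (EqAdd x y z) = lin_eq [(1, Var x), (1, Var y), (-1, Var z)] 0"
| "eqn_formula (EqMul x y z) = mul_formula x y z"

lemma regulated_eqn_formula: "regulated (eqn_formula D)"
  by (cases D) (simp_all add: regulated_mul_formula)

lemma atoms_eqn_formula: "eqn_wf V D \<Longrightarrow> atoms (eqn_formula D) \<subseteq> alphabet V"
  by (cases D) (auto simp: atoms_mul_formula alphabet_def)

lemma encodes_eqn_formula: "eqn_wf V D \<Longrightarrow> encodes (lang (alphabet V) (eqn_formula D)) D"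
  by (cases D) (auto intro: encodes_const_formula encodes_add_formula encodes_mul_formula)

theorem lemma3p4:
  fixes V :: "'v set" and D :: "'v eqn"
  assumes "finite V" and "eqn_wf V D"
  shows "\<exists>\<phi> :: 'v letter crasp. regulated \<phi> \<and> atoms \<phi> \<subseteq> alphabet V
           \<and> encodes (lang (alphabet V) \<phi>) D"
  using regulated_eqn_formula atoms_eqn_formula[OF assms(2)] encodes_eqn_formula[OF assms(2)]
  by blast

end
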